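(* For $i\ge1$ let $x_i=(1+\alpha)\Gamma(2+\alpha)\frac{\Gamma(i)}{\Gamma(2+\alpha+i)}$, $\alpha=k/\lambda$, and set $x_0=0$. Then for all $i,j\ge1$, as $n\to\infty$, $$x^{(n)}_i=x_i+O(n^{-1}),\qquad (nk)^{-2}\mathbf E X^{(n)}_iX^{(n)}_j=x_ix_j+O(n^{-1}).$$ Moreover, for all $i,j\ge1$ the finite limits $h_{i,j}=\lim_{n\to\infty}h^{(n)}_{i,j}$ exist; they are symmetric ($h_{i,j}=h_{j,i}$) and, with the convention $h_{i,j}=0$ when $\min\{i,j\}=0$, satisfy $$h_{i,i}=\frac{2(i-1)h_{i,i-1}+ix_i+(i-1)x_{i-1}}{2i+1+\alpha},\qquad h_{i,i+1}=\frac{(i-1)h_{i-1,i+1}+ih_{i,i}-ix_i}{2i+2+\alpha},$$ $$h_{i,r}=\frac{(i-1)h_{i-1,r}+(r-1)h_{i,r-1}}{i+r+1+\alpha},\qquad r\ge i+2.$$ In particular, for all $i,j\ge1$, $$(nk)^{-2}\mathbf E X^{(n)}_iX^{(n)}_j=x^{(n)}_ix^{(n)}_j+h_{i,j}(nk)^{-1}+o(n^{-1}).$$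
   Context: Preferred attachment affiliation model. Fix a real $\lambda>0$, an integer $k\ge 1$ and an integer $l\ge 0$ with $\lambda\le k+l$. At time $0$ a library contains books $w_1,\dots,w_l$, each with score $1$. For $n=0,1,2,\dots$, step $n+1$ proceeds as follows: $k$ new books $w_{l+nk+1},\dots,w_{l+(n+1)k}$ arrive, each with score $1$; then a customer $v_{n+1}$ arrives and, conditionally on the past and independently over books, downloads each book $w\in W_{n+1}=\{w_1,\dots,w_{l+(n+1)k}\}$ with probability $p_{n+1,s(w)}=\lambda s(w)/(l+(n+1)k+n\lambda)$, where $s(w)$ is the current score of $w$. Every book downloaded by $v_{n+1}$ then has its score increased by $1$. $W_n=\{w_1,\dots,w_{l+nk}\}$ and $s_n(w)$ denotes the score of $w$ after step $n$. $X^{(n)}_i$ is the number of books $w\in W_n$ with $s_n(w)=i$. Define $x^{(n)}_i=(nk)^{-1}\mathbf E X^{(n)}_i$ and $h^{(n)}_{i,j}=(nk)^{-1}\big(\mathbf E X^{(n)}_iX^{(n)}_j-\mathbf E X^{(n)}_i\,\mathbf E X^{(n)}_j\big)$. *)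

theory Defs
  imports "HOL-Probability.Probability" "HOL-Library.Landau_Symbols"
begin

(* A state is the score function: book w_{m+1} has index m; books not yet
   in the library have score 0. *)

definition paa_init :: "nat \<Rightarrow> (nat \<Rightarrow> nat)" where
  "paa_init l = (\<lambda>i. if i < l then 1 else 0)"

definition paa_step :: "real \<Rightarrow> nat \<Rightarrow> nat \<Rightarrow> nat \<Rightarrow> (nat \<Rightarrow> nat) \<Rightarrow> (nat \<Rightarrow> nat) pmf" where
  "paa_step lam k l n s =
     (let N = l + (n + 1) * k;
          s1 = (\<lambda>i. if i < l + n * k then s i else if i < N then 1 else 0)
      in map_pmf (\<lambda>D i. s1 i + (if D i then 1 else 0))
           (Pi_pmf {..<N} False
              (\<lambda>i. bernoulli_pmf (lam * real (s1 i) / (real N + real n * lam)))))"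

primrec paa_dist :: "real \<Rightarrow> nat \<Rightarrow> nat \<Rightarrow> nat \<Rightarrow> (nat \<Rightarrow> nat) pmf" where
  "paa_dist lam k l 0 = return_pmf (paa_init l)"
| "paa_dist lam k l (Suc n) = bind_pmf (paa_dist lam k l n) (paa_step lam k l n)"

definition paa_X :: "nat \<Rightarrow> nat \<Rightarrow> nat \<Rightarrow> nat \<Rightarrow> (nat \<Rightarrow> nat) \<Rightarrow> real" where
  "paa_X k l n i s = real (card {w. w < l + n * k \<and> s w = i})"

definition paa_EX :: "real \<Rightarrow> nat \<Rightarrow> nat \<Rightarrow> nat \<Rightarrow> nat \<Rightarrow> real" where
  "paa_EX lam k l n i = measure_pmf.expectation (paa_dist lam k l n) (paa_X k l n i)"

definition paa_EXX :: "real \<Rightarrow> nat \<Rightarrow> nat \<Rightarrow> nat \<Rightarrow> nat \<Rightarrow> nat \<Rightarrow> real" where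
  "paa_EXX lam k l n i j =
     measure_pmf.expectation (paa_dist lam k l n) (\<lambda>s. paa_X k l n i s * paa_X k l n j s)"

definition paa_xn :: "real \<Rightarrow> nat \<Rightarrow> nat \<Rightarrow> nat \<Rightarrow> nat \<Rightarrow> real" where
  "paa_xn lam k l n i = paa_EX lam k l n i / (real n * real k)"

definition paa_hn :: "real \<Rightarrow> nat \<Rightarrow> nat \<Rightarrow> nat \<Rightarrow> nat \<Rightarrow> nat \<Rightarrow> real" where
  "paa_hn lam k l n i j =
     (paa_EXX lam k l n i j - paa_EX lam k l n i * paa_EX lam k l n j) / (real n * real k)"

definition paa_x :: "real \<Rightarrow> nat \<Rightarrow> nat \<Rightarrow> real" where
  "paa_x lam k i = (let \<alpha> = real k / lam in
     if i = 0 then 0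
     else (1 + \<alpha>) * Gamma (2 + \<alpha>) * Gamma (real i) / Gamma (2 + \<alpha> + real i))"

end

theory Submission
  imports Defs
begin

(*
  The scores of different books evolve independently, so after n steps
  the law of the score vector is the product of the laws of the single scores
  (paa_dist_product).  Consequently all moments are governed by two sums over books,
      mean_count n i   = \<Sum>_w P(s_n(w) = i)                 (= E X_i)
      pair_count n i j = \<Sum>_w P(s_n(w) = i) P(s_n(w) = j),
  namely  E X_i X_j = E X_i E X_j - pair_count n i j + [i = j] E X_i  (EXX_eq_counts).
  One step of the process yields linear recurrences for both sums with coefficient
  1 - c / (n + e) + O(n^-2), where c = i / (1 + alpha) is the asymptotic download rate of
  a score-i book.  A discrete contraction argument (linear_growth_of_recurrence) turns
  such a recurrence into  u n = (d / (1 + c)) n + O(1);  by induction over the scores this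
  gives  mean_count n i = mean_rate i * n + O(1)  and  pair_count n i j = pair_rate i j * n
  + O(1)  with explicitly recursive rates.  The Gamma function identifies mean_rate i with
  k x_i, and h_{i,j} = ([i = j] mean_rate i - pair_rate i j) / k; its three recursions
  follow from those of the rates, and the asymptotic claims are then routine algebra.
*)

lemma Pi_pmf_map_dependent:
  assumes "finite A"
  shows "Pi_pmf A d (\<lambda>i. map_pmf (g i) (q i))
         = map_pmf (\<lambda>D i. if i \<in> A then g i (D i) else d) (Pi_pmf A d' q)"
proof -
  have "Pi_pmf A d (\<lambda>i. map_pmf (g i) (q i))
        = Pi_pmf A d (\<lambda>i. bind_pmf (q i) (\<lambda>x. return_pmf (g i x)))"
    by (simp add: map_pmf_def)
  also have "\<dots> = bind_pmf (Pi_pmf A d' q) (\<lambda>f. Pi_pmf A d (\<lambda>i. return_pmf (g i (f i))))"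
    by (rule Pi_pmf_bind[OF assms])
  also have "\<dots> = map_pmf (\<lambda>D i. if i \<in> A then g i (D i) else d) (Pi_pmf A d' q)"
    using assms by (simp add: map_pmf_def)
  finally show ?thesis .
qed

lemma Pi_pmf_pair_components:
  assumes "finite A" "w \<in> A" "v \<in> A" "w \<noteq> v"
  shows "map_pmf (\<lambda>f. (f w, f v)) (Pi_pmf A d p) = pair_pmf (p w) (p v)"
proof -
  have A: "A = insert w (A - {w})" using assms by auto
  have "map_pmf (\<lambda>f. (f w, f v)) (Pi_pmf A d p)
        = map_pmf (\<lambda>(y, f). (y, f v)) (pair_pmf (p w) (Pi_pmf (A - {w}) d p))"
    using assms by (subst A, subst Pi_pmf_insert) (auto simp: pmf.map_comp o_def case_prod_unfold)
  also have "\<dots> = pair_pmf (map_pmf id (p w)) (map_pmf (\<lambda>f. f v) (Pi_pmf (A - {w}) d p))"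
    by (subst map_pair[symmetric]) (simp add: case_prod_unfold)
  also have "\<dots> = pair_pmf (p w) (p v)"
    using assms by (subst Pi_pmf_component) (auto simp: pmf.map_id)
  finally show ?thesis .
qed

lemma integrable_indicator_pmf: "integrable (measure_pmf M) (indicator A :: _ \<Rightarrow> real)"
  unfolding integrable_indicator_iff by (simp add: less_top[symmetric])

(* Unlike the library's pmf_bernoulli_False, this needs no range condition on p. *)
lemma pmf_bernoulli_False_complement:
  "pmf (bernoulli_pmf p) False = 1 - pmf (bernoulli_pmf p) True"
proof -
  have "(\<Sum>x\<in>UNIV. pmf (bernoulli_pmf p) x) = 1" by (rule sum_pmf_eq_1) auto
  then show ?thesis by (simp add: UNIV_bool)
qed

lemma pmf_add_bernoulli:
  "pmf (map_pmf (\<lambda>b. s + (if b then 1 else 0)) (bernoulli_pmf p)) i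
   = (if s = i then pmf (bernoulli_pmf p) False else 0)
     + (if Suc s = i then pmf (bernoulli_pmf p) True else 0)"
proof -
  have "pmf (map_pmf (\<lambda>b. s + (if b then 1 else 0)) (bernoulli_pmf p)) i
        = measure (bernoulli_pmf p) ((\<lambda>b. s + (if b then 1 else 0)) -` {i})"
    by (rule pmf_map)
  moreover have "(\<lambda>b. s + (if b then 1 else 0)) -` {i}
      = (if s = i then {False} else {}) \<union> (if Suc s = i then {True} else {})"
    by (auto split: if_splits)
  ultimately show ?thesis by (auto simp: measure_pmf_single)
qed

lemma sum_if_diag:
  fixes f :: "'a \<Rightarrow> real"
  assumes "finite A" "w \<in> A"
  shows "(\<Sum>v\<in>A. if w = v then x else f v) = (\<Sum>v\<in>A. f v) - f w + x"
proof -
  have "(\<Sum>v\<in>A. if w = v then x else f v) = (\<Sum>v\<in>A. f v + (if w = v then x - f v else 0))"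
    by (intro sum.cong) auto
  also have "\<dots> = (\<Sum>v\<in>A. f v) + (x - f w)"
    using assms by (simp add: sum.distrib)
  finally show ?thesis by simp
qed

lemma bigo_const_div_shift:
  assumes e: "e > 0"
  shows "(\<lambda>n. a / (real n + e)) \<in> O(\<lambda>n. 1 / real n)"
proof (rule bigoI)
  show "eventually (\<lambda>n. norm (a / (real n + e)) \<le> \<bar>a\<bar> * norm (1 / real n)) at_top"
    using eventually_ge_at_top[of "1::nat"]
  proof eventually_elim
    case (elim n)
    then have "\<bar>a\<bar> / (real n + e) \<le> \<bar>a\<bar> / real n"
      using e by (intro divide_left_mono) auto
    then show ?case using e by (simp add: abs_div)
  qed
qed

lemma const_bigo_linear: "(\<lambda>_. c) \<in> O(\<lambda>n. real n)"
proof (rule bigoI)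
  show "eventually (\<lambda>n. norm c \<le> \<bar>c\<bar> * norm (real n)) at_top"
    using eventually_ge_at_top[of "1::nat"]
    by eventually_elim (use mult_left_mono[of 1 _ "\<bar>c\<bar>"] in auto)
qed

lemma affine_bigo_linear:
  assumes "(\<lambda>n. f n - L * real n) \<in> O(\<lambda>_. 1)"
  shows "f \<in> O(\<lambda>n. real n)"
proof -
  have "(\<lambda>n. f n - L * real n) \<in> O(\<lambda>n. real n)"
    using assms const_bigo_linear[of 1] by (rule landau_o.big_trans)
  from sum_in_bigo(1)[OF this, of "\<lambda>n. L * real n"] show ?thesis by simp
qed

lemma affine_slope_tendsto:
  assumes "(\<lambda>n. f n - L * real n) \<in> O(\<lambda>_. 1)"
  shows "(\<lambda>n. f n / real n) \<longlonglongrightarrow> L"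
proof -
  have "(\<lambda>n. (f n - L * real n) * (1 / real n)) \<in> o(\<lambda>_. 1)"
    using landau_o.big_small_mult[OF assms, of "\<lambda>n. 1 / real n"]
    by (simp add: smalloI_tendsto lim_const_over_n)
  then have "(\<lambda>n. (f n - L * real n) * (1 / real n)) \<longlonglongrightarrow> 0"
    by (auto dest: smalloD_tendsto)
  moreover have "eventually (\<lambda>n. (f n - L * real n) * (1 / real n) = f n / real n - L) at_top"
    using eventually_ge_at_top[of "1::nat"] by eventually_elim (simp add: field_simps)
  ultimately have "(\<lambda>n. f n / real n - L) \<longlonglongrightarrow> 0" by (rule Lim_transform_eventually)
  then show ?thesis by (rule LIM_zero_cancel)
qed

lemma bigo_inv_sq_times_linear:
  assumes "g \<in> O(\<lambda>n. 1 / real n)" "h \<in> O(\<lambda>n. 1 / real n)" "f \<in> O(\<lambda>n. real n)"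
  shows "(\<lambda>n. g n * h n * f n) \<in> O(\<lambda>n. 1 / real n)"
proof -
  have "(\<lambda>n. g n * h n * f n) \<in> O(\<lambda>n. 1 / real n * (1 / real n) * real n)"
    by (intro landau_o.big.mult assms)
  also have "(\<lambda>n. 1 / real n * (1 / real n) * real n) = (\<lambda>n. 1 / real n)"
    by (rule ext) (case_tac "n = 0"; simp)
  finally show ?thesis .
qed

lemma contraction_bound:
  fixes v q :: "nat \<Rightarrow> real"
  assumes step: "\<And>n. n \<ge> N \<Longrightarrow> 0 \<le> q n \<and> q n \<le> 1 \<and> \<bar>v (Suc n) - (1 - q n) * v n\<bar> \<le> q n * K"
    and start: "\<bar>v N\<bar> \<le> K"
    and "n \<ge> N"
  shows "\<bar>v n\<bar> \<le> K"
  using \<open>n \<ge> N\<close>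
proof (induction n rule: dec_induct)
  case base
  show ?case using start .
next
  case (step n)
  have q: "0 \<le> q n" "q n \<le> 1" and R: "\<bar>v (Suc n) - (1 - q n) * v n\<bar> \<le> q n * K"
    using assms(1)[OF step(1)] by auto
  have "\<bar>v (Suc n)\<bar> \<le> \<bar>(1 - q n) * v n\<bar> + \<bar>v (Suc n) - (1 - q n) * v n\<bar>"
    by linarith
  also have "\<dots> \<le> (1 - q n) * K + q n * K"
    using q R step(3) by (intro add_mono) (simp_all add: abs_mult mult_left_mono)
  finally show ?case by (simp add: algebra_simps)
qed

(* Eventual form of contraction_bound: if v (n+1) = (1 - c / (n + e)) v n + O(1/n), then v is
   bounded, because the error M / n is dominated by (c / (n + e)) K for a large constant K. *)
lemma bounded_of_perturbed_contraction:
  fixes v :: "nat \<Rightarrow> real"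
  assumes c: "c > 0" and e: "e > 0" and M: "M > 0"
    and ev: "eventually (\<lambda>n. \<bar>v (Suc n) - (1 - c / (real n + e)) * v n\<bar> \<le> M / real n) at_top"
  shows "v \<in> O(\<lambda>_. 1)"
proof -
  define q where "q n = c / (real n + e)" for n
  have pos: "real n + e > 0" for n using e by (simp add: add_pos_nonneg)
  have "eventually (\<lambda>n. q n \<le> 1 \<and> n \<ge> 1) at_top"
    using eventually_ge_at_top[of "nat \<lceil>c\<rceil>"] eventually_ge_at_top[of "1::nat"]
  proof eventually_elim
    case (elim n)
    then have "c \<le> real n + e" using e by linarith
    with elim pos[of n] show ?case by (simp add: q_def divide_le_eq)
  qed
  with ev have "eventually (\<lambda>n.
      \<bar>v (Suc n) - (1 - q n) * v n\<bar> \<le> M / real n \<and> q n \<le> 1 \<and> n \<ge> 1) at_top"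
    unfolding q_def by (rule eventually_conj)
  then obtain N where N: "\<And>n. n \<ge> N \<Longrightarrow>
      \<bar>v (Suc n) - (1 - q n) * v n\<bar> \<le> M / real n \<and> q n \<le> 1 \<and> n \<ge> 1"
    unfolding eventually_at_top_linorder by blast
  define K where "K = max \<bar>v N\<bar> (M * (1 + e) / c)"
  have "M * (1 + e) / c \<le> K" by (simp add: K_def)
  then have cK: "M * (1 + e) \<le> c * K"
    using c by (simp add: pos_divide_le_eq mult.commute)
  have bound: "\<bar>v n\<bar> \<le> K" if "n \<ge> N" for n
  proof (rule contraction_bound[OF _ _ that])
    fix n assume "n \<ge> N"
    note Nn = N[OF this]
    have "e \<le> e * real n" using Nn e by simp
    then have "M * (real n + e) \<le> (M * (1 + e)) * real n"
      using M by (simp add: algebra_simps)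
    also have "\<dots> \<le> c * K * real n"
      using cK Nn by (intro mult_right_mono) auto
    finally have "M / real n \<le> q n * K"
      using Nn pos[of n] by (simp add: q_def field_simps)
    then show "0 \<le> q n \<and> q n \<le> 1 \<and> \<bar>v (Suc n) - (1 - q n) * v n\<bar> \<le> q n * K"
      using Nn c pos[of n] by (simp add: q_def)
  qed (simp add: K_def)
  show ?thesis
    by (rule bigoI[of _ K]) (use bound in \<open>auto simp: eventually_at_top_linorder\<close>)
qed

lemma linear_growth_of_recurrence:
  fixes u r :: "nat \<Rightarrow> real"
  assumes c: "c > 0" and e: "e > 0"
    and r: "eventually (\<lambda>n. r n = c / (real n + e)) at_top"
    and R: "(\<lambda>n. u (Suc n) - (1 - r n) * u n - d) \<in> O(\<lambda>n. 1 / real n)"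
  shows "(\<lambda>n. u n - d / (1 + c) * real n) \<in> O(\<lambda>_. 1)"
proof -
  define L where "L = d / (1 + c)"
  (* the deviation from the line L * (n + e) satisfies the homogeneous recurrence up to
     the same error *)
  define v where "v n = u n - L * (real n + e)" for n
  have v_step: "v (Suc n) - (1 - c / (real n + e)) * v n = u (Suc n) - (1 - c / (real n + e)) * u n - d"
    for n
  proof -
    have gen: "v (Suc n) - (1 - q) * v n - (u (Suc n) - (1 - q) * u n - d)
        = d - L * (1 + q * (real n + e))" for q
      by (simp add: v_def algebra_simps)
    have "c / (real n + e) * (real n + e) = c" using e by (simp add: add_pos_nonneg)
    then have "d - L * (1 + c / (real n + e) * (real n + e)) = 0" using c by (simp add: L_def)
    with gen[of "c / (real n + e)"] show ?thesis by linarith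
  qed
  from R obtain M where M: "M > 0"
    and evR: "eventually (\<lambda>n. norm (u (Suc n) - (1 - r n) * u n - d) \<le> M * norm (1 / real n)) at_top"
    by (elim landau_o.bigE)
  have "eventually (\<lambda>n. \<bar>v (Suc n) - (1 - c / (real n + e)) * v n\<bar> \<le> M / real n) at_top"
    using evR r by eventually_elim (simp add: v_step)
  then have "v \<in> O(\<lambda>_. 1)" by (rule bounded_of_perturbed_contraction[OF c e M])
  moreover have "(\<lambda>n. u n - d / (1 + c) * real n) = (\<lambda>n. v n + L * e)"
    by (simp add: fun_eq_iff v_def L_def algebra_simps add_divide_distrib)
  ultimately show ?thesis by (simp add: sum_in_bigo)
qed

(* The model with fixed parameters. *)
locale paa_model =
  fixes lam :: real and k l :: nat
  assumes lam_pos: "lam > 0" and k_pos: "k \<ge> 1"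
begin

definition denom :: "nat \<Rightarrow> real" where
  "denom n = real (l + (n + 1) * k) + real n * lam"

definition book_step :: "nat \<Rightarrow> nat \<Rightarrow> nat \<Rightarrow> nat pmf" where
  "book_step n w s =
     (let s1 = (if w < l + n * k then s else if w < l + (n + 1) * k then 1 else 0)
      in map_pmf (\<lambda>b. s1 + (if b then 1 else 0)) (bernoulli_pmf (lam * real s1 / denom n)))"

primrec score_dist :: "nat \<Rightarrow> nat \<Rightarrow> nat pmf" where
  "score_dist 0 w = return_pmf (paa_init l w)"
| "score_dist (Suc n) w =
     (if w < l + (n + 1) * k then bind_pmf (score_dist n w) (book_step n w) else return_pmf 0)"

lemma score_dist_absent: "w \<ge> l + n * k \<Longrightarrow> score_dist n w = return_pmf 0"
  by (induction n) (auto simp: paa_init_def)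

lemma paa_step_product:
  "paa_step lam k l n f = Pi_pmf {..<l + Suc n * k} 0 (\<lambda>w. book_step n w (f w))"
proof -
  let ?A' = "{..<l + Suc n * k}"
  define s1 :: "nat \<Rightarrow> nat"
    where "s1 i = (if i < l + n * k then f i else if i < l + (n + 1) * k then 1 else 0)" for i
  let ?B = "Pi_pmf ?A' False (\<lambda>w. bernoulli_pmf (lam * real (s1 w) / denom n))"
  have "Pi_pmf ?A' 0 (\<lambda>w. book_step n w (f w))
      = Pi_pmf ?A' 0 (\<lambda>w. map_pmf (\<lambda>b. s1 w + (if b then 1 else 0))
                                (bernoulli_pmf (lam * real (s1 w) / denom n)))"
    by (intro Pi_pmf_cong) (auto simp: book_step_def s1_def Let_def)
  also have "\<dots> = map_pmf (\<lambda>D i. if i \<in> ?A' then s1 i + (if D i then 1 else 0) else 0) ?B"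
    by (rule Pi_pmf_map_dependent) auto
  also have "\<dots> = map_pmf (\<lambda>D i. s1 i + (if D i then 1 else 0)) ?B"
  proof (rule map_pmf_cong[OF refl])
    fix D assume "D \<in> set_pmf ?B"
    then have "\<forall>x. x \<notin> ?A' \<longrightarrow> D x = False" using set_Pi_pmf_subset[of ?A' False] by blast
    then show "(\<lambda>i. if i \<in> ?A' then s1 i + (if D i then 1 else 0) else 0)
             = (\<lambda>i. s1 i + (if D i then 1 else 0))"
      by (auto simp: fun_eq_iff s1_def)
  qed
  also have "\<dots> = paa_step lam k l n f"
    by (simp only: paa_step_def Let_def s1_def denom_def Suc_eq_plus1)
  finally show ?thesis by simp
qed

lemma paa_dist_product: "paa_dist lam k l n = Pi_pmf {..<l + n * k} 0 (score_dist n)"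
proof (induction n)
  case 0
  show ?case by (simp add: paa_init_def fun_eq_iff)
next
  case (Suc n)
  let ?A = "{..<l + n * k}" and ?A' = "{..<l + Suc n * k}"
  have "Pi_pmf ?A' 0 (score_dist (Suc n)) = Pi_pmf ?A' 0 (\<lambda>w. bind_pmf (score_dist n w) (book_step n w))"
    by (intro Pi_pmf_cong) auto
  also have "\<dots> = bind_pmf (Pi_pmf ?A' 0 (score_dist n)) (\<lambda>f. Pi_pmf ?A' 0 (\<lambda>w. book_step n w (f w)))"
    by (rule Pi_pmf_bind) auto
  also have "Pi_pmf ?A' 0 (score_dist n) = Pi_pmf ?A 0 (score_dist n)"
    by (rule Pi_pmf_subset') (auto simp: score_dist_absent)
  also have "bind_pmf (Pi_pmf ?A 0 (score_dist n)) (\<lambda>f. Pi_pmf ?A' 0 (\<lambda>w. book_step n w (f w)))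
      = bind_pmf (Pi_pmf ?A 0 (score_dist n)) (paa_step lam k l n)"
    by (rule bind_pmf_cong[OF refl]) (simp only: paa_step_product)
  finally show ?case using Suc by simp
qed

lemma X_as_indicator_sum: "paa_X k l n i s = (\<Sum>w<l + n * k. indicator {s. s w = i} s)"
proof -
  have "(\<Sum>w<l + n * k. (indicator {s. s w = i} s :: real)) = real (card ({..<l + n * k} \<inter> {w. s w = i}))"
    by (simp add: indicator_def)
  also have "{..<l + n * k} \<inter> {w. s w = i} = {w. w < l + n * k \<and> s w = i}" by auto
  finally show ?thesis by (simp add: paa_X_def)
qed

lemma joint_score_prob:
  assumes "w < l + n * k" "v < l + n * k"
  shows "measure_pmf.prob (paa_dist lam k l n) {s. s w = i \<and> s v = j}
         = (if w = v then (if i = j then pmf (score_dist n w) i else 0)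
            else pmf (score_dist n w) i * pmf (score_dist n v) j)"
proof (cases "w = v")
  case True
  have "{s. s w = i \<and> s v = j} = (if i = j then (\<lambda>s. s w) -` {i} else {})"
    using True by auto
  then show ?thesis
    using True assms by (simp add: pmf_map[symmetric] paa_dist_product Pi_pmf_component)
next
  case False
  have "{s. s w = i \<and> s v = j} = (\<lambda>s. (s w, s v)) -` {(i, j)}" by auto
  then show ?thesis
    using False assms
    by (simp add: pmf_map[symmetric] paa_dist_product Pi_pmf_pair_components pmf_pair)
qed

lemma score_prob:
  "w < l + n * k \<Longrightarrow> measure_pmf.prob (paa_dist lam k l n) {s. s w = i} = pmf (score_dist n w) i"
  using joint_score_prob[of w n w i i] by simp

definition mean_count :: "nat \<Rightarrow> nat \<Rightarrow> real" where
  "mean_count n i = (\<Sum>w<l + n * k. pmf (score_dist n w) i)"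

definition pair_count :: "nat \<Rightarrow> nat \<Rightarrow> nat \<Rightarrow> real" where
  "pair_count n i j = (\<Sum>w<l + n * k. pmf (score_dist n w) i * pmf (score_dist n w) j)"

lemma EX_eq_mean_count: "paa_EX lam k l n i = mean_count n i"
proof -
  have "paa_EX lam k l n i
        = measure_pmf.expectation (paa_dist lam k l n) (\<lambda>s. \<Sum>w<l + n * k. indicator {s. s w = i} s)"
    unfolding paa_EX_def X_as_indicator_sum ..
  also have "\<dots> = mean_count n i"
    by (simp add: Bochner_Integration.integral_sum integrable_indicator_pmf score_prob mean_count_def)
  finally show ?thesis .
qed

lemma EXX_eq_counts:
  "paa_EXX lam k l n i j
   = mean_count n i * mean_count n j - pair_count n i j + (if i = j then mean_count n i else 0)"
proof -
  let ?N = "l + n * k" and ?p = "\<lambda>w a. pmf (score_dist n w) a"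
  have "paa_EXX lam k l n i j = measure_pmf.expectation (paa_dist lam k l n)
          (\<lambda>s. \<Sum>w<?N. \<Sum>v<?N. indicator {s. s w = i \<and> s v = j} s)"
    unfolding paa_EXX_def X_as_indicator_sum sum_product
    by (intro Bochner_Integration.integral_cong refl sum.cong) (auto simp: indicator_def)
  also have "\<dots> = (\<Sum>w<?N. \<Sum>v<?N. if w = v then (if i = j then ?p w i else 0) else ?p w i * ?p v j)"
    by (simp add: Bochner_Integration.integral_sum integrable_indicator_pmf joint_score_prob)
  also have "\<dots> = (\<Sum>w<?N. (\<Sum>v<?N. ?p w i * ?p v j) - ?p w i * ?p w j + (if i = j then ?p w i else 0))"
    by (intro sum.cong refl sum_if_diag) auto
  also have "\<dots> = mean_count n i * mean_count n j - pair_count n i j + (if i = j then mean_count n i else 0)"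
    by (simp add: mean_count_def pair_count_def sum.distrib sum_subtractf sum_product)
  finally show ?thesis .
qed

definition dl_prob :: "nat \<Rightarrow> nat \<Rightarrow> real" where
  "dl_prob n s = pmf (bernoulli_pmf (lam * real s / denom n)) True"

definition arrived_dist :: "nat \<Rightarrow> nat \<Rightarrow> nat pmf" where
  "arrived_dist n w = (if w < l + n * k then score_dist n w else return_pmf 1)"

lemma score_dist_Suc:
  assumes "w < l + (n + 1) * k"
  shows "score_dist (Suc n) w = bind_pmf (arrived_dist n w)
           (\<lambda>s. map_pmf (\<lambda>b. s + (if b then 1 else 0)) (bernoulli_pmf (lam * real s / denom n)))"
proof (cases "w < l + n * k")
  case True
  then have "book_step n w
      = (\<lambda>s. map_pmf (\<lambda>b. s + (if b then 1 else 0)) (bernoulli_pmf (lam * real s / denom n)))"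
    by (simp add: fun_eq_iff book_step_def)
  with True assms show ?thesis by (simp add: arrived_dist_def)
next
  case False
  with assms show ?thesis
    by (simp add: arrived_dist_def book_step_def score_dist_absent bind_return_pmf)
qed

lemma score_dist_recurrence:
  assumes "w < l + (n + 1) * k"
  shows "pmf (score_dist (Suc n) w) (Suc i)
         = pmf (arrived_dist n w) (Suc i) * (1 - dl_prob n (Suc i)) + pmf (arrived_dist n w) i * dl_prob n i"
proof -
  have "pmf (score_dist (Suc n) w) (Suc i) = measure_pmf.expectation (arrived_dist n w)
          (\<lambda>s. (1 - dl_prob n (Suc i)) * indicator {Suc i} s + dl_prob n i * indicator {i} s)"
    unfolding score_dist_Suc[OF assms] pmf_bind
    by (intro Bochner_Integration.integral_cong refl)
       (auto simp: pmf_add_bernoulli pmf_bernoulli_False_complement dl_prob_def indicator_def)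
  also have "\<dots> = pmf (arrived_dist n w) (Suc i) * (1 - dl_prob n (Suc i)) + pmf (arrived_dist n w) i * dl_prob n i"
    by (simp add: integrable_indicator_pmf measure_pmf_single)
  finally show ?thesis .
qed

lemma score_dist_nonzero: "w < l + n * k \<Longrightarrow> pmf (score_dist n w) 0 = 0"
proof (induction n arbitrary: w)
  case 0
  then show ?case by (simp add: paa_init_def)
next
  case (Suc n)
  have "0 \<notin> set_pmf (arrived_dist n w)"
    using Suc.IH by (auto simp: arrived_dist_def set_pmf_iff)
  moreover have "w < l + (n + 1) * k" using Suc.prems by simp
  ultimately have "0 \<notin> set_pmf (score_dist (Suc n) w)"
    by (simp only: score_dist_Suc) (auto split: if_splits)
  then show ?case by (simp add: set_pmf_iff)
qed

lemma mean_count_zero: "mean_count n 0 = 0"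
  by (simp add: mean_count_def score_dist_nonzero)

lemma pair_count_zero: "pair_count n 0 j = 0" "pair_count n i 0 = 0"
  by (simp_all add: pair_count_def score_dist_nonzero)

definition arrived_mean :: "nat \<Rightarrow> nat \<Rightarrow> real" where
  "arrived_mean n i = (\<Sum>w<l + (n + 1) * k. pmf (arrived_dist n w) i)"

definition arrived_pair :: "nat \<Rightarrow> nat \<Rightarrow> nat \<Rightarrow> real" where
  "arrived_pair n i j = (\<Sum>w<l + (n + 1) * k. pmf (arrived_dist n w) i * pmf (arrived_dist n w) j)"

lemma sum_new_books:
  fixes g :: "nat \<Rightarrow> real"
  shows "(\<Sum>w<l + (n + 1) * k. g w) = (\<Sum>w<l + n * k. g w) + (\<Sum>w\<in>{l + n * k..<l + (n + 1) * k}. g w)"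
  by (simp add: lessThan_atLeast0 sum.atLeastLessThan_concat)

lemma arrived_mean_eq: "arrived_mean n i = mean_count n i + real k * of_bool (i = 1)"
proof -
  have "(\<Sum>w\<in>{l + n * k..<l + (n + 1) * k}. pmf (arrived_dist n w) i) = real k * of_bool (i = 1)"
    by (simp add: arrived_dist_def)
  then show ?thesis
    unfolding arrived_mean_def mean_count_def sum_new_books
    by (simp add: arrived_dist_def)
qed

lemma arrived_pair_eq: "arrived_pair n i j = pair_count n i j + real k * of_bool (i = 1 \<and> j = 1)"
proof -
  have "(\<Sum>w\<in>{l + n * k..<l + (n + 1) * k}. pmf (arrived_dist n w) i * pmf (arrived_dist n w) j)
        = real k * of_bool (i = 1 \<and> j = 1)"
    by (auto simp: arrived_dist_def indicator_def)
  then show ?thesis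
    unfolding arrived_pair_def pair_count_def sum_new_books
    by (simp add: arrived_dist_def)
qed

lemma mean_count_Suc:
  "mean_count (Suc n) (Suc i)
   = (1 - dl_prob n (Suc i)) * arrived_mean n (Suc i) + dl_prob n i * arrived_mean n i"
  unfolding mean_count_def arrived_mean_def
  by (simp add: score_dist_recurrence sum.distrib sum_distrib_left mult.commute del: score_dist.simps)

lemma pair_count_Suc:
  "pair_count (Suc n) (Suc i) (Suc j)
   = (1 - dl_prob n (Suc i)) * (1 - dl_prob n (Suc j)) * arrived_pair n (Suc i) (Suc j)
     + (1 - dl_prob n (Suc i)) * dl_prob n j * arrived_pair n (Suc i) j
     + dl_prob n i * (1 - dl_prob n (Suc j)) * arrived_pair n i (Suc j)
     + dl_prob n i * dl_prob n j * arrived_pair n i j"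
proof -
  let ?p = "\<lambda>w a. pmf (arrived_dist n w) a"
  let ?A = "dl_prob n (Suc i)" and ?B = "dl_prob n (Suc j)" and ?a = "dl_prob n i" and ?b = "dl_prob n j"
  have "pair_count (Suc n) (Suc i) (Suc j)
      = (\<Sum>w<l + (n + 1) * k. (?p w (Suc i) * (1 - ?A) + ?p w i * ?a) * (?p w (Suc j) * (1 - ?B) + ?p w j * ?b))"
    unfolding pair_count_def
    by (intro sum.cong) (auto simp del: score_dist.simps simp add: score_dist_recurrence)
  also have "\<dots> = (\<Sum>w<l + (n + 1) * k. (1 - ?A) * (1 - ?B) * (?p w (Suc i) * ?p w (Suc j))
          + (1 - ?A) * ?b * (?p w (Suc i) * ?p w j) + ?a * (1 - ?B) * (?p w i * ?p w (Suc j))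
          + ?a * ?b * (?p w i * ?p w j))"
    by (intro sum.cong refl) (simp add: algebra_simps)
  finally show ?thesis
    by (simp only: arrived_pair_def sum.distrib sum_distrib_left)
qed

definition alpha :: real where "alpha = real k / lam"

(* For large n a score-s book is downloaded with probability dl_rate s / (n + time_shift). *)
definition time_shift :: real where "time_shift = real (l + k) / (real k + lam)"
definition dl_rate :: "nat \<Rightarrow> real" where "dl_rate s = real s / (1 + alpha)"

lemma alpha_pos: "alpha > 0"
  using lam_pos k_pos by (simp add: alpha_def)

lemma time_shift_pos: "time_shift > 0"
  using lam_pos k_pos by (simp add: time_shift_def)

lemma dl_rate_Suc_pos: "dl_rate (Suc s) > 0"
  using alpha_pos by (simp add: dl_rate_def)

(* Once the raw probability lam s / denom n drops below 1 the clamping of bernoulli_pmf is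
   inactive and the probability is exactly dl_rate s / (n + time_shift). *)
lemma dl_prob_eventually: "eventually (\<lambda>n. dl_prob n s = dl_rate s / (real n + time_shift)) at_top"
proof -
  have kl: "real k + lam > 0" using lam_pos by simp
  have denom: "denom n = (real n + time_shift) * (real k + lam)" for n
    unfolding denom_def time_shift_def using kl by (simp add: field_simps)
  have rate: "dl_rate s = real s * lam / (real k + lam)"
    unfolding dl_rate_def alpha_def using lam_pos kl by (simp add: field_simps)
  have eq: "lam * real s / denom n = dl_rate s / (real n + time_shift)" for n
    unfolding denom rate by (simp add: mult.commute)
  have "eventually (\<lambda>n. dl_rate s \<le> real n) at_top"
    using eventually_ge_at_top[of "nat \<lceil>dl_rate s\<rceil>"] by eventually_elim linarith
  then show ?thesis
  proof eventually_elim
    case (elim n)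
    have "0 \<le> dl_rate s" using alpha_pos by (simp add: dl_rate_def)
    moreover have "dl_rate s / (real n + time_shift) \<le> 1"
      using elim time_shift_pos by (simp add: divide_le_eq)
    ultimately show ?case
      using time_shift_pos unfolding dl_prob_def eq by (simp add: add_pos_nonneg)
  qed
qed

lemma dl_prob_bigo: "(\<lambda>n. dl_prob n s) \<in> O(\<lambda>n. 1 / real n)"
  using bigo_const_div_shift[OF time_shift_pos, of "dl_rate s"]
  by (subst landau_o.big.in_cong[OF dl_prob_eventually])

lemma dl_prob_times_affine:
  assumes "(\<lambda>n. f n - L * real n) \<in> O(\<lambda>_. 1)"
  shows "(\<lambda>n. dl_prob n s * f n - dl_rate s * L) \<in> O(\<lambda>n. 1 / real n)"
proof -
  have "eventually (\<lambda>n. dl_prob n s * f n - dl_rate s * L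
      = (f n - L * real n - L * time_shift) * (dl_rate s / (real n + time_shift))) at_top"
    using dl_prob_eventually[of s]
  proof eventually_elim
    case (elim n)
    have "real n + time_shift \<noteq> 0" using time_shift_pos by (simp add: add_pos_nonneg)
    with elim show ?case by (simp add: field_simps)
  qed
  moreover have "(\<lambda>n. (f n - L * real n - L * time_shift) * (dl_rate s / (real n + time_shift))) \<in> O(\<lambda>n. 1 / real n)"
    using landau_o.big.mult[OF sum_in_bigo(2)[OF assms, of "\<lambda>_. L * time_shift"]
                               bigo_const_div_shift[OF time_shift_pos]]
    by simp
  ultimately show ?thesis by (subst landau_o.big.in_cong)
qed

(* A priori bound: pair_count n i j is at most the number of books. *)
lemma pair_count_bigo: "(\<lambda>n. pair_count n i j) \<in> O(\<lambda>n. real n)"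
proof (rule bigoI)
  show "eventually (\<lambda>n. norm (pair_count n i j) \<le> real (l + k) * norm (real n)) at_top"
    using eventually_ge_at_top[of "1::nat"]
  proof eventually_elim
    case (elim n)
    have "0 \<le> pair_count n i j" by (simp add: pair_count_def sum_nonneg)
    moreover have "pair_count n i j \<le> (\<Sum>w<l + n * k. 1)"
      unfolding pair_count_def by (intro sum_mono) (auto intro: mult_le_one pmf_le_1)
    moreover have "real (l + n * k) \<le> real (l + k) * real n"
      using elim by (simp add: algebra_simps mult_le_cancel_left1)
    ultimately show ?case by simp
  qed
qed

(* Growth rates: mean_count n i \<sim> mean_rate i * n; the recursion is the fixed point
   d / (1 + c) produced by linear_growth_of_recurrence. *)
primrec mean_rate :: "nat \<Rightarrow> real" where
  "mean_rate 0 = 0"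
| "mean_rate (Suc i) = (dl_rate i * mean_rate i + real k * of_bool (i = 0)) / (1 + dl_rate (Suc i))"

lemma mean_count_step:
  assumes IH: "(\<lambda>n. mean_count n i - mean_rate i * real n) \<in> O(\<lambda>_. 1)"
  shows "(\<lambda>n. mean_count n (Suc i) - mean_rate (Suc i) * real n) \<in> O(\<lambda>_. 1)"
proof -
  define d where "d = dl_rate i * mean_rate i + real k * of_bool (i = 0)"
  have arrived: "(\<lambda>n. arrived_mean n i - mean_rate i * real n) \<in> O(\<lambda>_. 1)"
    using sum_in_bigo(1)[OF IH, of "\<lambda>_. real k * of_bool (i = 1)"]
    by (simp add: arrived_mean_eq algebra_simps)
  (* the recurrence error: the old score-i books moving up, minus the new books moving on *)
  have "mean_count (Suc n) (Suc i) - (1 - dl_prob n (Suc i)) * mean_count n (Suc i) - d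
        = (dl_prob n i * arrived_mean n i - dl_rate i * mean_rate i)
          - dl_prob n (Suc i) * (real k * of_bool (i = 0))" for n
    by (simp add: mean_count_Suc arrived_mean_eq d_def algebra_simps)
  moreover have "(\<lambda>n. (dl_prob n i * arrived_mean n i - dl_rate i * mean_rate i)
          - dl_prob n (Suc i) * (real k * of_bool (i = 0))) \<in> O(\<lambda>n. 1 / real n)"
  proof (rule sum_in_bigo(2)[OF dl_prob_times_affine[OF arrived]])
    show "(\<lambda>n. dl_prob n (Suc i) * (real k * of_bool (i = 0))) \<in> O(\<lambda>n. 1 / real n)"
      using dl_prob_bigo[of "Suc i"] k_pos by (cases "i = 0") simp_all
  qed
  ultimately have "(\<lambda>n. mean_count (Suc n) (Suc i) - (1 - dl_prob n (Suc i)) * mean_count n (Suc i) - d)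
                   \<in> O(\<lambda>n. 1 / real n)"
    by simp
  from linear_growth_of_recurrence[OF dl_rate_Suc_pos time_shift_pos dl_prob_eventually this]
  show ?thesis by (simp add: d_def)
qed

lemma mean_count_affine: "(\<lambda>n. mean_count n i - mean_rate i * real n) \<in> O(\<lambda>_. 1)"
proof (induction i)
  case 0
  show ?case by (simp add: mean_count_zero)
next
  case (Suc i)
  then show ?case by (rule mean_count_step)
qed

(* From now on mean_rate is handled through mean_rate_scaled. *)
declare mean_rate.simps(2)[simp del]

(* Growth rate of pair_count, again the fixed point of the recurrence. *)
function pair_rate :: "nat \<Rightarrow> nat \<Rightarrow> real" where
  "pair_rate i j =
     (if i = 0 \<or> j = 0 then 0
      else (dl_rate (i - 1) * pair_rate (i - 1) j + dl_rate (j - 1) * pair_rate i (j - 1)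
            + real k * of_bool (i = 1 \<and> j = 1)) / (1 + dl_rate i + dl_rate j))"
  by pat_completeness auto
termination by (relation "Wellfounded.measure (\<lambda>(i, j). i + j)") auto

declare pair_rate.simps[simp del]

lemma pair_rate_zero: "pair_rate 0 j = 0" "pair_rate i 0 = 0"
  by (simp_all add: pair_rate.simps)

lemma pair_rate_Suc:
  "pair_rate (Suc i) (Suc j)
   = (dl_rate i * pair_rate i (Suc j) + dl_rate j * pair_rate (Suc i) j
      + real k * of_bool (i = 0 \<and> j = 0)) / (1 + dl_rate (Suc i) + dl_rate (Suc j))"
  by (simp add: pair_rate.simps)

(* The recursion is symmetric in i and j, hence so is the rate. *)
lemma pair_rate_sym: "pair_rate i j = pair_rate j i"
proof (induction "i + j" arbitrary: i j rule: less_induct)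
  case less
  show ?case
  proof (cases "i = 0 \<or> j = 0")
    case True
    then show ?thesis by (auto simp: pair_rate_zero)
  next
    case False
    then obtain i' j' where ij: "i = Suc i'" "j = Suc j'" by (meson not0_implies_Suc)
    with less have "pair_rate i' (Suc j') = pair_rate (Suc j') i'"
      "pair_rate (Suc i') j' = pair_rate j' (Suc i')" by simp_all
    then show ?thesis unfolding ij pair_rate_Suc by (simp add: algebra_simps conj_commute)
  qed
qed

lemma arrived_pair_bigo: "(\<lambda>n. arrived_pair n i j) \<in> O(\<lambda>n. real n)"
  unfolding arrived_pair_eq by (intro sum_in_bigo pair_count_bigo const_bigo_linear)

lemma pair_count_Suc_deviation:
  "pair_count (Suc n) (Suc i) (Suc j)
     - (1 - (dl_prob n (Suc i) + dl_prob n (Suc j))) * pair_count n (Suc i) (Suc j)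
     - (r1 + r2 + real k * of_bool (i = 0 \<and> j = 0))
   = (dl_prob n i * arrived_pair n i (Suc j) - r1) + (dl_prob n j * arrived_pair n (Suc i) j - r2)
     - (dl_prob n (Suc i) + dl_prob n (Suc j)) * (real k * of_bool (i = 0 \<and> j = 0))
     + (dl_prob n (Suc i) * dl_prob n (Suc j) * arrived_pair n (Suc i) (Suc j)
        - dl_prob n (Suc i) * dl_prob n j * arrived_pair n (Suc i) j
        - dl_prob n i * dl_prob n (Suc j) * arrived_pair n i (Suc j)
        + dl_prob n i * dl_prob n j * arrived_pair n i j)"
  by (simp add: pair_count_Suc arrived_pair_eq algebra_simps)

lemma pair_count_step:
  assumes IH1: "(\<lambda>n. pair_count n (Suc i) j - pair_rate (Suc i) j * real n) \<in> O(\<lambda>_. 1)"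
    and IH2: "(\<lambda>n. pair_count n i (Suc j) - pair_rate i (Suc j) * real n) \<in> O(\<lambda>_. 1)"
  shows "(\<lambda>n. pair_count n (Suc i) (Suc j) - pair_rate (Suc i) (Suc j) * real n) \<in> O(\<lambda>_. 1)"
proof -
  let ?p = "real k * of_bool (i = 0 \<and> j = 0)"
  have affine: "(\<lambda>n. arrived_pair n i' j' - pair_rate i' j' * real n) \<in> O(\<lambda>_. 1)"
    if "(\<lambda>n. pair_count n i' j' - pair_rate i' j' * real n) \<in> O(\<lambda>_. 1)" for i' j'
    using sum_in_bigo(1)[OF that, of "\<lambda>_. real k * of_bool (i' = 1 \<and> j' = 1)"]
    by (simp add: arrived_pair_eq algebra_simps)
  have drift: "(\<lambda>n. (dl_prob n i * arrived_pair n i (Suc j) - dl_rate i * pair_rate i (Suc j))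
      + (dl_prob n j * arrived_pair n (Suc i) j - dl_rate j * pair_rate (Suc i) j)) \<in> O(\<lambda>n. 1 / real n)"
    by (rule sum_in_bigo(1)[OF dl_prob_times_affine[OF affine[OF IH2]] dl_prob_times_affine[OF affine[OF IH1]]])
  have new_books: "(\<lambda>n. (dl_prob n (Suc i) + dl_prob n (Suc j)) * ?p) \<in> O(\<lambda>n. 1 / real n)"
    using dl_prob_bigo k_pos by (cases "i = 0 \<and> j = 0") (simp_all add: sum_in_bigo)
  have quadratic: "(\<lambda>n. dl_prob n (Suc i) * dl_prob n (Suc j) * arrived_pair n (Suc i) (Suc j)
        - dl_prob n (Suc i) * dl_prob n j * arrived_pair n (Suc i) j
        - dl_prob n i * dl_prob n (Suc j) * arrived_pair n i (Suc j)
        + dl_prob n i * dl_prob n j * arrived_pair n i j) \<in> O(\<lambda>n. 1 / real n)"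
    by (intro sum_in_bigo bigo_inv_sq_times_linear dl_prob_bigo arrived_pair_bigo)
  have R: "(\<lambda>n. pair_count (Suc n) (Suc i) (Suc j)
      - (1 - (dl_prob n (Suc i) + dl_prob n (Suc j))) * pair_count n (Suc i) (Suc j)
      - (dl_rate i * pair_rate i (Suc j) + dl_rate j * pair_rate (Suc i) j + ?p)) \<in> O(\<lambda>n. 1 / real n)"
    unfolding pair_count_Suc_deviation
    by (rule sum_in_bigo(1)[OF sum_in_bigo(2)[OF drift new_books] quadratic])
  have ev: "eventually (\<lambda>n. dl_prob n (Suc i) + dl_prob n (Suc j)
      = (dl_rate (Suc i) + dl_rate (Suc j)) / (real n + time_shift)) at_top"
    using dl_prob_eventually[of "Suc i"] dl_prob_eventually[of "Suc j"]
    by eventually_elim (simp add: add_divide_distrib)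
  have pos: "dl_rate (Suc i) + dl_rate (Suc j) > 0"
    using dl_rate_Suc_pos[of i] dl_rate_Suc_pos[of j] by simp
  from linear_growth_of_recurrence[OF pos time_shift_pos ev R]
  show ?thesis by (simp only: pair_rate_Suc add.assoc)
qed

lemma pair_count_affine: "(\<lambda>n. pair_count n i j - pair_rate i j * real n) \<in> O(\<lambda>_. 1)"
proof (induction "i + j" arbitrary: i j rule: less_induct)
  case less
  show ?case
  proof (cases "i = 0 \<or> j = 0")
    case True
    then show ?thesis by (auto simp: pair_count_zero pair_rate_zero)
  next
    case False
    then obtain i' j' where ij: "i = Suc i'" "j = Suc j'" by (meson not0_implies_Suc)
    show ?thesis unfolding ij by (rule pair_count_step) (use less ij in simp_all)
  qed
qed

lemma Gamma_Suc_pos: "(x::real) > 0 \<Longrightarrow> Gamma (x + 1) = x * Gamma x"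
  by (rule Gamma_plus1) (use nonpos_Ints_nonpos in fastforce)

lemma x_one: "paa_x lam k (Suc 0) = (1 + alpha) / (2 + alpha)"
proof -
  have "Gamma (2 + alpha + 1) = (2 + alpha) * Gamma (2 + alpha)"
    using alpha_pos by (intro Gamma_Suc_pos) simp
  moreover have "Gamma (2 + alpha) > 0" using alpha_pos by (intro Gamma_real_pos) simp
  ultimately show ?thesis by (simp add: paa_x_def Let_def alpha_def[symmetric])
qed

lemma x_Suc: "i \<ge> 1 \<Longrightarrow> paa_x lam k (Suc i) = real i / (real i + 2 + alpha) * paa_x lam k i"
proof -
  assume i: "i \<ge> 1"
  have "Gamma (real i + 1) = real i * Gamma (real i)" using i by (intro Gamma_Suc_pos) simp
  moreover have "Gamma (2 + alpha + real i + 1) = (2 + alpha + real i) * Gamma (2 + alpha + real i)"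
    using alpha_pos by (intro Gamma_Suc_pos) simp
  moreover have "Gamma (2 + alpha + real i) > 0" using alpha_pos by (intro Gamma_real_pos) simp
  ultimately show ?thesis
    using i alpha_pos by (simp add: paa_x_def Let_def alpha_def[symmetric] field_simps)
qed

lemma dl_rate_scaled: "(1 + alpha) * dl_rate s = real s"
  using alpha_pos by (simp add: dl_rate_def)

lemma mean_rate_scaled:
  "(real (Suc i) + 1 + alpha) * mean_rate (Suc i)
   = real i * mean_rate i + (1 + alpha) * real k * of_bool (i = 0)"
proof -
  have D: "(1 + alpha) * (1 + dl_rate (Suc i)) = real (Suc i) + 1 + alpha"
    using dl_rate_scaled[of "Suc i"] by (simp add: algebra_simps)
  have "1 + dl_rate (Suc i) \<noteq> 0" using dl_rate_Suc_pos[of i] by simp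
  then have "(1 + dl_rate (Suc i)) * mean_rate (Suc i) = dl_rate i * mean_rate i + real k * of_bool (i = 0)"
    by (simp add: mean_rate.simps(2))
  then have "(real (Suc i) + 1 + alpha) * mean_rate (Suc i)
        = (1 + alpha) * (dl_rate i * mean_rate i + real k * of_bool (i = 0))"
    unfolding D[symmetric] by (simp only: mult.assoc)
  also have "\<dots> = real i * mean_rate i + (1 + alpha) * real k * of_bool (i = 0)"
    by (simp only: distrib_left mult.assoc[symmetric] dl_rate_scaled)
  finally show ?thesis .
qed

lemma pair_rate_scaled:
  "(real (Suc i) + real (Suc j) + 1 + alpha) * pair_rate (Suc i) (Suc j)
   = real i * pair_rate i (Suc j) + real j * pair_rate (Suc i) j
     + (1 + alpha) * real k * of_bool (i = 0 \<and> j = 0)"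
proof -
  have D: "(1 + alpha) * (1 + dl_rate (Suc i) + dl_rate (Suc j)) = real (Suc i) + real (Suc j) + 1 + alpha"
    using dl_rate_scaled[of "Suc i"] dl_rate_scaled[of "Suc j"] by (simp add: algebra_simps)
  have "1 + dl_rate (Suc i) + dl_rate (Suc j) \<noteq> 0"
    using dl_rate_Suc_pos[of i] dl_rate_Suc_pos[of j] by simp
  then have "(1 + dl_rate (Suc i) + dl_rate (Suc j)) * pair_rate (Suc i) (Suc j)
      = dl_rate i * pair_rate i (Suc j) + dl_rate j * pair_rate (Suc i) j + real k * of_bool (i = 0 \<and> j = 0)"
    by (simp add: pair_rate_Suc)
  then have "(real (Suc i) + real (Suc j) + 1 + alpha) * pair_rate (Suc i) (Suc j)
      = (1 + alpha) * (dl_rate i * pair_rate i (Suc j) + dl_rate j * pair_rate (Suc i) j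
                       + real k * of_bool (i = 0 \<and> j = 0))"
    unfolding D[symmetric] by (simp only: mult.assoc)
  also have "\<dots> = real i * pair_rate i (Suc j) + real j * pair_rate (Suc i) j
                   + (1 + alpha) * real k * of_bool (i = 0 \<and> j = 0)"
    by (simp only: distrib_left mult.assoc[symmetric] dl_rate_scaled)
  finally show ?thesis .
qed

lemma mean_rate_eq_x: "mean_rate i = real k * paa_x lam k i"
proof (induction i)
  case 0
  show ?case by (simp add: paa_x_def)
next
  case (Suc i)
  have pos: "real (Suc i) + 1 + alpha > 0" using alpha_pos by simp
  show ?case
  proof (cases "i = 0")
    case True
    then show ?thesis
      using mean_rate_scaled[of 0] pos by (simp add: x_one field_simps)
  next
    case False
    then have "(real (Suc i) + 1 + alpha) * mean_rate (Suc i)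
        = (real (Suc i) + 1 + alpha) * (real k * paa_x lam k (Suc i))"
      using mean_rate_scaled[of i] Suc.IH pos by (simp add: x_Suc field_simps)
    then show ?thesis using pos by simp
  qed
qed

lemma x_eq_mean_rate: "paa_x lam k i = mean_rate i / real k"
  using k_pos by (simp add: mean_rate_eq_x)

definition h_lim :: "nat \<Rightarrow> nat \<Rightarrow> real" where
  "h_lim i j = ((if i = j then mean_rate i else 0) - pair_rate i j) / real k"

lemma h_lim_sym: "h_lim i j = h_lim j i"
  by (simp add: h_lim_def pair_rate_sym)

lemma h_lim_zero: "min i j = 0 \<Longrightarrow> h_lim i j = 0"
  by (auto simp: h_lim_def pair_rate_zero min_def split: if_splits)

(* The three recursions of h, each obtained from the scaled rate recursions by clearing
   the denominator 1 + alpha. *)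
lemma h_lim_diag:
  assumes "i \<ge> 1"
  shows "h_lim i i = (2 * real (i - 1) * h_lim i (i - 1) + real i * paa_x lam k i
                      + real (i - 1) * paa_x lam k (i - 1)) / (2 * real i + 1 + alpha)"
proof -
  obtain m where i: "i = Suc m" using assms by (cases i) auto
  have "(2 * real i + 1 + alpha) * pair_rate i i
        = 2 * real m * pair_rate i m + (1 + alpha) * real k * of_bool (m = 0)"
    using pair_rate_scaled[of m m] pair_rate_sym[of m i] by (simp add: i)
  moreover have "(real i + 1 + alpha) * mean_rate i
        = real m * mean_rate m + (1 + alpha) * real k * of_bool (m = 0)"
    using mean_rate_scaled[of m] by (simp add: i)
  ultimately have key: "2 * real m * (- pair_rate i m) + real i * mean_rate i + real m * mean_rate m
        = (2 * real i + 1 + alpha) * (mean_rate i - pair_rate i i)"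
    by (simp add: i algebra_simps)
  have "2 * real m * h_lim i m + real i * paa_x lam k i + real m * paa_x lam k m
        = (2 * real m * (- pair_rate i m) + real i * mean_rate i + real m * mean_rate m) / real k"
    using k_pos by (simp add: i h_lim_def x_eq_mean_rate field_simps)
  moreover have "2 * real i + 1 + alpha \<noteq> 0" using alpha_pos by simp
  ultimately show ?thesis
    unfolding key by (simp add: i h_lim_def)
qed

lemma h_lim_next:
  assumes "i \<ge> 1"
  shows "h_lim i (i + 1) = (real (i - 1) * h_lim (i - 1) (i + 1) + real i * h_lim i i
                            - real i * paa_x lam k i) / (2 * real i + 2 + alpha)"
proof -
  obtain m where i: "i = Suc m" using assms by (cases i) auto
  have "(2 * real i + 2 + alpha) * pair_rate i (i + 1)
        = real m * pair_rate m (i + 1) + real i * pair_rate i i"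
    using pair_rate_scaled[of m "Suc m"] by (simp add: i algebra_simps)
  then have key: "real m * (- pair_rate m (i + 1)) + real i * (mean_rate i - pair_rate i i) - real i * mean_rate i
        = (2 * real i + 2 + alpha) * (- pair_rate i (i + 1))"
    by (simp add: algebra_simps)
  have "real m * h_lim m (i + 1) + real i * h_lim i i - real i * paa_x lam k i
        = (real m * (- pair_rate m (i + 1)) + real i * (mean_rate i - pair_rate i i) - real i * mean_rate i) / real k"
    using k_pos by (simp add: i h_lim_def x_eq_mean_rate field_simps)
  moreover have "2 * real i + 2 + alpha \<noteq> 0" using alpha_pos by simp
  ultimately show ?thesis
    unfolding key by (simp add: i h_lim_def)
qed

lemma h_lim_far:
  assumes "i \<ge> 1" "r \<ge> i + 2"
  shows "h_lim i r = (real (i - 1) * h_lim (i - 1) r + real (r - 1) * h_lim i (r - 1))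
                     / (real i + real r + 1 + alpha)"
proof -
  obtain m where i: "i = Suc m" using assms by (cases i) auto
  obtain q where r: "r = Suc q" using assms by (cases r) auto
  have key: "real m * (- pair_rate m r) + real q * (- pair_rate i q)
        = (real i + real r + 1 + alpha) * (- pair_rate i r)"
    using pair_rate_scaled[of m q] assms by (simp add: i r algebra_simps)
  have "real m * h_lim m r + real q * h_lim i q
        = (real m * (- pair_rate m r) + real q * (- pair_rate i q)) / real k"
    using assms k_pos by (simp add: i r h_lim_def field_simps)
  moreover have "real i + real r + 1 + alpha \<noteq> 0" using alpha_pos by simp
  ultimately show ?thesis
    using assms unfolding key by (simp add: i r h_lim_def)
qed

lemma xn_eq: "paa_xn lam k l n i = mean_count n i / (real n * real k)"
  by (simp add: paa_xn_def EX_eq_mean_count)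

lemma hn_eq:
  "paa_hn lam k l n i j = ((if i = j then mean_count n i else 0) - pair_count n i j) / (real n * real k)"
  by (simp add: paa_hn_def EXX_eq_counts EX_eq_mean_count)

lemma inv_nk_bigo: "(\<lambda>n. 1 / (real n * real k)) \<in> O(\<lambda>n. 1 / real n)"
proof (rule bigoI)
  show "eventually (\<lambda>n. norm (1 / (real n * real k)) \<le> (1 / real k) * norm (1 / real n)) at_top"
    using k_pos by (simp add: abs_mult mult_ac)
qed

lemma xn_asymp: "(\<lambda>n. paa_xn lam k l n i - paa_x lam k i) \<in> O(\<lambda>n. 1 / real n)"
proof -
  have "eventually (\<lambda>n. paa_xn lam k l n i - paa_x lam k i
          = (mean_count n i - mean_rate i * real n) * (1 / (real n * real k))) at_top"
    using eventually_ge_at_top[of "1::nat"]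
    by eventually_elim (use k_pos in \<open>simp add: xn_eq x_eq_mean_rate field_simps\<close>)
  moreover have "(\<lambda>n. (mean_count n i - mean_rate i * real n) * (1 / (real n * real k))) \<in> O(\<lambda>n. 1 / real n)"
    using landau_o.big.mult[OF mean_count_affine inv_nk_bigo] by simp
  ultimately show ?thesis by (subst landau_o.big.in_cong)
qed

lemma xn_bounded: "(\<lambda>n. paa_xn lam k l n i) \<in> O(\<lambda>_. 1)"
proof -
  have "(\<lambda>n. 1 / real n) \<in> O(\<lambda>_. 1::real)"
  proof (rule bigoI)
    show "eventually (\<lambda>n. norm (1 / real n) \<le> 1 * norm (1::real)) at_top"
      using eventually_ge_at_top[of "1::nat"] by eventually_elim simp
  qed
  with xn_asymp have "(\<lambda>n. paa_xn lam k l n i - paa_x lam k i) \<in> O(\<lambda>_. 1)"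
    by (rule landau_o.big_trans)
  from sum_in_bigo(1)[OF this, of "\<lambda>_. paa_x lam k i"] show ?thesis by simp
qed

lemma second_moment_asymp:
  "(\<lambda>n. paa_EXX lam k l n i j / (real n * real k) ^ 2 - paa_x lam k i * paa_x lam k j) \<in> O(\<lambda>n. 1 / real n)"
proof -
  define D where "D n = (if i = j then mean_count n i else 0) - pair_count n i j" for n
  (* E X_i X_j / N^2 - x_i x_j splits into two first-moment errors and a D / N^2 term *)
  have ev: "eventually (\<lambda>n. paa_EXX lam k l n i j / (real n * real k) ^ 2 - paa_x lam k i * paa_x lam k j
          = (paa_xn lam k l n i - paa_x lam k i) * paa_xn lam k l n j
            + paa_x lam k i * (paa_xn lam k l n j - paa_x lam k j)
            + (1 / (real n * real k)) * (1 / (real n * real k)) * D n) at_top"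
    using eventually_ge_at_top[of "1::nat"]
    by eventually_elim (use k_pos in \<open>simp add: EXX_eq_counts xn_eq D_def field_simps power2_eq_square\<close>)
  have "D \<in> O(\<lambda>n. real n)"
    unfolding D_def using affine_bigo_linear[OF mean_count_affine] pair_count_bigo
    by (cases "i = j") (simp_all add: sum_in_bigo)
  then have t3: "(\<lambda>n. (1 / (real n * real k)) * (1 / (real n * real k)) * D n) \<in> O(\<lambda>n. 1 / real n)"
    by (rule bigo_inv_sq_times_linear[OF inv_nk_bigo inv_nk_bigo])
  have t1: "(\<lambda>n. (paa_xn lam k l n i - paa_x lam k i) * paa_xn lam k l n j) \<in> O(\<lambda>n. 1 / real n)"
    using landau_o.big.mult[OF xn_asymp xn_bounded] by simp
  have t2: "(\<lambda>n. paa_x lam k i * (paa_xn lam k l n j - paa_x lam k j)) \<in> O(\<lambda>n. 1 / real n)"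
    using xn_asymp by simp
  show ?thesis
    using sum_in_bigo(1)[OF sum_in_bigo(1)[OF t1 t2] t3] by (subst landau_o.big.in_cong[OF ev])
qed

(* h^{(n)}_{i,j} converges to h_{i,j}, since both count sums have linear growth. *)
lemma h_lim_tendsto: "(\<lambda>n. paa_hn lam k l n i j) \<longlonglongrightarrow> h_lim i j"
proof -
  have "(\<lambda>n. ((if i = j then mean_count n i / real n else 0) - pair_count n i j / real n) / real k)
        \<longlonglongrightarrow> ((if i = j then mean_rate i else 0) - pair_rate i j) / real k"
    using affine_slope_tendsto[OF mean_count_affine] affine_slope_tendsto[OF pair_count_affine] k_pos
    by (intro tendsto_intros) auto
  moreover have "paa_hn lam k l n i j
      = ((if i = j then mean_count n i / real n else 0) - pair_count n i j / real n) / real k" for n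
    by (simp add: hn_eq diff_divide_distrib)
  ultimately show ?thesis by (simp add: h_lim_def)
qed

lemma second_moment_expansion:
  "(\<lambda>n. paa_EXX lam k l n i j / (real n * real k) ^ 2 - paa_xn lam k l n i * paa_xn lam k l n j
        - h_lim i j / (real n * real k)) \<in> o(\<lambda>n. 1 / real n)"
proof -
  have "eventually (\<lambda>n. paa_EXX lam k l n i j / (real n * real k) ^ 2 - paa_xn lam k l n i * paa_xn lam k l n j
          - h_lim i j / (real n * real k) = (paa_hn lam k l n i j - h_lim i j) * (1 / (real n * real k))) at_top"
    using eventually_ge_at_top[of "1::nat"]
    by eventually_elim (use k_pos in \<open>simp add: paa_hn_def paa_xn_def field_simps power2_eq_square\<close>)
  moreover have "(\<lambda>n. paa_hn lam k l n i j - h_lim i j) \<in> o(\<lambda>_. 1)"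
    using h_lim_tendsto by (intro smalloI_tendsto) (auto simp: LIM_zero)
  ultimately show ?thesis
    using landau_o.small_big_mult[OF _ inv_nk_bigo] by (subst landau_o.small.in_cong) auto
qed

end

theorem lemma1:
  fixes lam :: real and k l :: nat
  assumes "lam > 0" and "k \<ge> 1" and "lam \<le> real (k + l)"
  defines "\<alpha> \<equiv> real k / lam"
  shows "(\<forall>i j. i \<ge> 1 \<longrightarrow> j \<ge> 1 \<longrightarrow>
            (\<lambda>n. paa_xn lam k l n i - paa_x lam k i) \<in> O(\<lambda>n. 1 / real n) \<and>
            (\<lambda>n. paa_EXX lam k l n i j / (real n * real k) ^ 2
                 - paa_x lam k i * paa_x lam k j) \<in> O(\<lambda>n. 1 / real n))
       \<and> (\<exists>h :: nat \<Rightarrow> nat \<Rightarrow> real.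
            (\<forall>i j. i \<ge> 1 \<longrightarrow> j \<ge> 1 \<longrightarrow> (\<lambda>n. paa_hn lam k l n i j) \<longlonglongrightarrow> h i j)
          \<and> (\<forall>i j. i \<ge> 1 \<longrightarrow> j \<ge> 1 \<longrightarrow> h i j = h j i)
          \<and> (\<forall>i j. min i j = 0 \<longrightarrow> h i j = 0)
          \<and> (\<forall>i. i \<ge> 1 \<longrightarrow>
               h i i = (2 * real (i - 1) * h i (i - 1) + real i * paa_x lam k i
                        + real (i - 1) * paa_x lam k (i - 1)) / (2 * real i + 1 + \<alpha>))
          \<and> (\<forall>i. i \<ge> 1 \<longrightarrow>
               h i (i + 1) = (real (i - 1) * h (i - 1) (i + 1) + real i * h i i
                              - real i * paa_x lam k i) / (2 * real i + 2 + \<alpha>))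
          \<and> (\<forall>i r. i \<ge> 1 \<longrightarrow> r \<ge> i + 2 \<longrightarrow>
               h i r = (real (i - 1) * h (i - 1) r + real (r - 1) * h i (r - 1))
                       / (real i + real r + 1 + \<alpha>))
          \<and> (\<forall>i j. i \<ge> 1 \<longrightarrow> j \<ge> 1 \<longrightarrow>
               (\<lambda>n. paa_EXX lam k l n i j / (real n * real k) ^ 2
                    - paa_xn lam k l n i * paa_xn lam k l n j
                    - h i j / (real n * real k)) \<in> o(\<lambda>n. 1 / real n)))"
proof -
  interpret paa_model lam k l
    using assms(1,2) by unfold_locales
  have "\<alpha> = alpha" by (simp add: \<alpha>_def alpha_def)
  then show ?thesis
    using xn_asymp second_moment_asymp h_lim_tendsto h_lim_sym h_lim_zero
      h_lim_diag h_lim_next h_lim_far second_moment_expansion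
    by (intro conjI exI[of _ h_lim]) auto
qed

end
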